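(* Let $n\ge 6$. For every $n$-vertex graph $G$, $$av_1(G)\le \frac n2+1,$$ with equality if and only if $G=K_2\cup(n-2)K_1$, i.e. $G$ consists of a single edge together with $n-2$ isolated vertices.
   Context: All graphs are finite and simple. For a graph $G=(V,E)$, a set $S\subseteq V$ is a $1$-nearly independent vertex set if the subgraph induced by $S$ has exactly one edge. $\sigma_1(G)$ is the number of such sets, $S_1(G)$ the sum of their sizes, and $av_1(G)=S_1(G)/\sigma_1(G)$, with $av_1(G)=0$ when $G$ has no edges. *)

theory Defs
  imports Complex_Main
begin

definition simple_graph :: "'a set \<Rightarrow> 'a set set \<Rightarrow> bool" where
  "simple_graph V E \<longleftrightarrow> finite V \<and> (\<forall>e\<in>E. e \<subseteq> V \<and> card e = 2)"

definition induced_edges :: "'a set set \<Rightarrow> 'a set \<Rightarrow> 'a set set" where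
  "induced_edges E S = {e \<in> E. e \<subseteq> S}"

definition nearly_indep_sets :: "'a set \<Rightarrow> 'a set set \<Rightarrow> 'a set set" where
  "nearly_indep_sets V E = {S. S \<subseteq> V \<and> card (induced_edges E S) = 1}"

definition sigma1 :: "'a set \<Rightarrow> 'a set set \<Rightarrow> nat" where
  "sigma1 V E = card (nearly_indep_sets V E)"

definition S1 :: "'a set \<Rightarrow> 'a set set \<Rightarrow> nat" where
  "S1 V E = (\<Sum>S\<in>nearly_indep_sets V E. card S)"

definition av1 :: "'a set \<Rightarrow> 'a set set \<Rightarrow> real" where
  "av1 V E = (if E = {} then 0 else real (S1 V E) / real (sigma1 V E))"

end

theory Submission
  imports Defs
begin

text \<open>Every set S inducing exactly one edge contains that edge e(S). For a vertex x, the map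
  S \<mapsto> S - {x} injects the sets having x as a vertex outside e(S) into the sets avoiding x.
  Hence x lies in at most (sigma1 + c(x)) / 2 of the sets, where c(x) counts the sets with x
  on their edge; summing over x, with c summing to 2 sigma1, gives 2 S1 \<le> (n + 2) sigma1.
  For a single edge, inserting x inverts the injection, so equality holds. Otherwise V itself
  is not 1-nearly independent, and an inclusion-maximal such set M \<noteq> V misses some x; then
  M avoids x but is not S - {x} for any S, so the inequality at x is strict.\<close>

text \<open>Meaningful only when S induces exactly one edge.\<close>
definition edge_of :: "'a set set \<Rightarrow> 'a set \<Rightarrow> 'a set" where
  "edge_of E S = \<Union>(induced_edges E S)"

definition sets_avoiding :: "'a set \<Rightarrow> 'a set set \<Rightarrow> 'a \<Rightarrow> 'a set set" where
  "sets_avoiding V E x = {S \<in> nearly_indep_sets V E. x \<notin> S}"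

definition sets_free_at :: "'a set \<Rightarrow> 'a set set \<Rightarrow> 'a \<Rightarrow> 'a set set" where
  "sets_free_at V E x = {S \<in> nearly_indep_sets V E. x \<in> S - edge_of E S}"

lemma nearly_indep_sets_subset: "S \<in> nearly_indep_sets V E \<Longrightarrow> S \<subseteq> V"
  by (simp add: nearly_indep_sets_def)

lemma finite_nearly_indep_sets: "finite V \<Longrightarrow> finite (nearly_indep_sets V E)"
  by (rule finite_subset[of _ "Pow V"]) (auto simp: nearly_indep_sets_def)

lemma induced_edges_eq_edge_of:
  assumes "S \<in> nearly_indep_sets V E"
  shows "induced_edges E S = {edge_of E S}"
proof -
  from assms obtain e where "induced_edges E S = {e}"
    by (auto simp: nearly_indep_sets_def card_1_singleton_iff)
  then show ?thesis by (simp add: edge_of_def)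
qed

lemma edge_of_in_edges: "S \<in> nearly_indep_sets V E \<Longrightarrow> edge_of E S \<in> E"
  using induced_edges_eq_edge_of by (fastforce simp: induced_edges_def)

lemma edge_of_subset: "S \<in> nearly_indep_sets V E \<Longrightarrow> edge_of E S \<subseteq> S"
  using induced_edges_eq_edge_of by (fastforce simp: induced_edges_def)

lemma card_edge_of:
  assumes "simple_graph V E" and "S \<in> nearly_indep_sets V E"
  shows "card (edge_of E S) = 2"
  using assms edge_of_in_edges[OF assms(2)] by (simp add: simple_graph_def)

lemma Diff_vertex_in_nearly_indep_sets:
  assumes "S \<in> nearly_indep_sets V E" and "x \<notin> edge_of E S"
  shows "S - {x} \<in> nearly_indep_sets V E"
proof -
  have "induced_edges E (S - {x}) = induced_edges E S"
    using assms induced_edges_eq_edge_of[OF assms(1)] by (auto simp: induced_edges_def)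
  then show ?thesis using assms(1) by (auto simp: nearly_indep_sets_def)
qed

lemma card_sets_free_at_le_card_sets_avoiding:
  assumes "finite V"
  shows "card (sets_free_at V E x) \<le> card (sets_avoiding V E x)"
proof (rule card_inj_on_le)
  show "inj_on (\<lambda>S. S - {x}) (sets_free_at V E x)"
    by (auto simp: sets_free_at_def inj_on_def)
  show "(\<lambda>S. S - {x}) ` sets_free_at V E x \<subseteq> sets_avoiding V E x"
    by (auto simp: sets_free_at_def sets_avoiding_def Diff_vertex_in_nearly_indep_sets)
  show "finite (sets_avoiding V E x)"
    using finite_nearly_indep_sets[OF assms] by (simp add: sets_avoiding_def)
qed

lemma card_sets_containing_vertex:
  assumes "simple_graph V E"
  shows "2 * card {S \<in> nearly_indep_sets V E. x \<in> S} + card (sets_avoiding V E x)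
    = card (nearly_indep_sets V E) + card {S \<in> nearly_indep_sets V E. x \<in> edge_of E S}
      + card (sets_free_at V E x)"
proof -
  let ?N = "nearly_indep_sets V E"
  let ?C = "{S \<in> ?N. x \<in> edge_of E S}"
  have fin: "finite ?N"
    using assms finite_nearly_indep_sets by (auto simp: simple_graph_def)
  have containing: "{S \<in> ?N. x \<in> S} = sets_free_at V E x \<union> ?C"
    using edge_of_subset by (auto simp: sets_free_at_def)
  have all: "?N = sets_avoiding V E x \<union> {S \<in> ?N. x \<in> S}"
    by (auto simp: sets_avoiding_def)
  have "card {S \<in> ?N. x \<in> S} = card (sets_free_at V E x) + card ?C"
    unfolding containing using fin
    by (intro card_Un_disjoint) (auto simp: sets_free_at_def)
  moreover have "card ?N = card (sets_avoiding V E x) + card {S \<in> ?N. x \<in> S}"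
    using fin by (subst all, intro card_Un_disjoint) (auto simp: sets_avoiding_def)
  ultimately show ?thesis by simp
qed

lemma S1_eq_sum_card_containing:
  assumes "finite V"
  shows "S1 V E = (\<Sum>x\<in>V. card {S \<in> nearly_indep_sets V E. x \<in> S})"
proof -
  have "card {x \<in> V. x \<in> S} = card S" if "S \<in> nearly_indep_sets V E" for S
  proof -
    have "{x \<in> V. x \<in> S} = S" using nearly_indep_sets_subset[OF that] by blast
    then show ?thesis by simp
  qed
  then show ?thesis
    unfolding S1_def
    by (intro sum_multicount_gen[symmetric] assms finite_nearly_indep_sets) auto
qed

lemma sum_card_edge_containing:
  assumes "simple_graph V E"
  shows "(\<Sum>x\<in>V. card {S \<in> nearly_indep_sets V E. x \<in> edge_of E S}) = 2 * sigma1 V E"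
proof -
  have finV: "finite V" using assms by (simp add: simple_graph_def)
  have "card {x \<in> V. x \<in> edge_of E S} = 2" if "S \<in> nearly_indep_sets V E" for S
  proof -
    have "edge_of E S \<subseteq> V"
      using edge_of_subset[OF that] nearly_indep_sets_subset[OF that] by blast
    then have "{x \<in> V. x \<in> edge_of E S} = edge_of E S" by blast
    then show ?thesis using card_edge_of[OF assms that] by simp
  qed
  then show ?thesis
    unfolding sigma1_def
    by (subst sum_multicount[OF finV finite_nearly_indep_sets[OF finV]]) auto
qed

lemma S1_double_counting:
  assumes "simple_graph V E"
  shows "2 * S1 V E + (\<Sum>x\<in>V. card (sets_avoiding V E x))
    = (card V + 2) * sigma1 V E + (\<Sum>x\<in>V. card (sets_free_at V E x))"
proof -
  have finV: "finite V" using assms by (simp add: simple_graph_def)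
  have "2 * S1 V E + (\<Sum>x\<in>V. card (sets_avoiding V E x))
      = (\<Sum>x\<in>V. 2 * card {S \<in> nearly_indep_sets V E. x \<in> S} + card (sets_avoiding V E x))"
    by (simp add: S1_eq_sum_card_containing[OF finV] sum_distrib_left sum.distrib)
  also have "\<dots> = (\<Sum>x\<in>V. sigma1 V E + card {S \<in> nearly_indep_sets V E. x \<in> edge_of E S}
      + card (sets_free_at V E x))"
    by (simp add: card_sets_containing_vertex[OF assms] sigma1_def)
  also have "\<dots> = (card V + 2) * sigma1 V E + (\<Sum>x\<in>V. card (sets_free_at V E x))"
    by (simp add: sum.distrib sum_card_edge_containing[OF assms] algebra_simps)
  finally show ?thesis .
qed

lemma two_S1_le:
  assumes "simple_graph V E"
  shows "2 * S1 V E \<le> (card V + 2) * sigma1 V E"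
proof -
  have "(\<Sum>x\<in>V. card (sets_free_at V E x)) \<le> (\<Sum>x\<in>V. card (sets_avoiding V E x))"
    using assms by (intro sum_mono card_sets_free_at_le_card_sets_avoiding) (simp add: simple_graph_def)
  then show ?thesis using S1_double_counting[OF assms] by linarith
qed

lemma two_S1_eq:
  assumes "simple_graph V E"
    and "\<And>x. x \<in> V \<Longrightarrow> card (sets_avoiding V E x) \<le> card (sets_free_at V E x)"
  shows "2 * S1 V E = (card V + 2) * sigma1 V E"
proof -
  have "(\<Sum>x\<in>V. card (sets_free_at V E x)) = (\<Sum>x\<in>V. card (sets_avoiding V E x))"
  proof (rule sum.cong)
    fix x assume "x \<in> V"
    then show "card (sets_free_at V E x) = card (sets_avoiding V E x)"
      using assms card_sets_free_at_le_card_sets_avoiding[of V E x] by (simp add: simple_graph_def le_antisym)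
  qed simp
  then show ?thesis using S1_double_counting[OF assms(1)] by linarith
qed

lemma two_S1_less:
  assumes "simple_graph V E"
    and "x \<in> V" and "card (sets_free_at V E x) < card (sets_avoiding V E x)"
  shows "2 * S1 V E < (card V + 2) * sigma1 V E"
proof -
  have finV: "finite V" using assms by (simp add: simple_graph_def)
  have "(\<Sum>x\<in>V. card (sets_free_at V E x)) < (\<Sum>x\<in>V. card (sets_avoiding V E x))"
    using assms card_sets_free_at_le_card_sets_avoiding[OF finV] by (intro sum_strict_mono_ex1 finV) auto
  then show ?thesis using S1_double_counting[OF assms(1)] by linarith
qed

lemma card_sets_avoiding_le_single_edge:
  assumes "finite V" and "E = {e}" and "x \<in> V"
  shows "card (sets_avoiding V E x) \<le> card (sets_free_at V E x)"
proof (rule card_inj_on_le)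
  have mem_iff: "S \<in> nearly_indep_sets V E \<longleftrightarrow> S \<subseteq> V \<and> e \<subseteq> S" for S
  proof -
    have "induced_edges E S = (if e \<subseteq> S then {e} else {})"
      using assms(2) by (auto simp: induced_edges_def)
    then show ?thesis by (simp add: nearly_indep_sets_def)
  qed
  show "inj_on (insert x) (sets_avoiding V E x)"
    by (auto simp: sets_avoiding_def inj_on_def insert_ident)
  show "insert x ` sets_avoiding V E x \<subseteq> sets_free_at V E x"
  proof clarify
    fix S assume "S \<in> sets_avoiding V E x"
    then have S: "S \<subseteq> V" "e \<subseteq> S" "x \<notin> S" by (auto simp: sets_avoiding_def mem_iff)
    then have "insert x S \<in> nearly_indep_sets V E" using S assms(3) by (auto simp: mem_iff)
    moreover have "edge_of E (insert x S) = e"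
      using edge_of_in_edges[OF calculation] assms(2) by simp
    ultimately show "insert x S \<in> sets_free_at V E x"
      using S(2,3) by (auto simp: sets_free_at_def)
  qed
  show "finite (sets_free_at V E x)"
    using finite_nearly_indep_sets[OF assms(1)] by (simp add: sets_free_at_def)
qed

lemma ex_card_sets_free_at_less:
  assumes "finite V" and "nearly_indep_sets V E \<noteq> {}" and "V \<notin> nearly_indep_sets V E"
  shows "\<exists>x\<in>V. card (sets_free_at V E x) < card (sets_avoiding V E x)"
proof -
  let ?N = "nearly_indep_sets V E"
  have finN: "finite ?N" using finite_nearly_indep_sets[OF assms(1)] .
  obtain M where M: "M \<in> ?N" and M_maximal: "\<And>S. S \<in> ?N \<Longrightarrow> M \<subseteq> S \<Longrightarrow> S = M"
    using finite_has_maximal[OF finN assms(2)] by metis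
  have "M \<noteq> V" using M assms(3) by blast
  then obtain x where x: "x \<in> V" "x \<notin> M"
    using nearly_indep_sets_subset[OF M] by blast
  have "card (sets_free_at V E x) \<le> card (sets_avoiding V E x - {M})"
  proof (rule card_inj_on_le)
    show "inj_on (\<lambda>S. S - {x}) (sets_free_at V E x)"
      by (auto simp: sets_free_at_def inj_on_def)
    show "(\<lambda>S. S - {x}) ` sets_free_at V E x \<subseteq> sets_avoiding V E x - {M}"
    proof clarify
      fix S assume S: "S \<in> sets_free_at V E x"
      then have "S - {x} \<in> sets_avoiding V E x"
        by (auto simp: sets_free_at_def sets_avoiding_def Diff_vertex_in_nearly_indep_sets)
      moreover have "S - {x} \<noteq> M"
      proof
        assume "S - {x} = M"
        then have "S = insert x M" using S by (auto simp: sets_free_at_def)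
        then show False using M_maximal[of S] S x(2) by (auto simp: sets_free_at_def)
      qed
      ultimately show "S - {x} \<in> sets_avoiding V E x - {M}" by blast
    qed
    show "finite (sets_avoiding V E x - {M})"
      using finN by (simp add: sets_avoiding_def)
  qed
  also have "\<dots> < card (sets_avoiding V E x)"
    using M x(2) finN by (intro card_Diff1_less) (auto simp: sets_avoiding_def)
  finally show ?thesis using x(1) by blast
qed

lemma edge_in_nearly_indep_sets:
  assumes "simple_graph V E" and "e \<in> E"
  shows "e \<in> nearly_indep_sets V E"
proof -
  have "f = e" if "f \<in> E" and "f \<subseteq> e" for f
    using assms that by (metis card_subset_eq card.infinite simple_graph_def zero_neq_numeral)
  then have "induced_edges E e = {e}" using assms(2) by (auto simp: induced_edges_def)
  then show ?thesis using assms by (simp add: nearly_indep_sets_def simple_graph_def)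
qed

lemma vertex_set_in_nearly_indep_sets_iff:
  assumes "simple_graph V E"
  shows "V \<in> nearly_indep_sets V E \<longleftrightarrow> card E = 1"
proof -
  have "induced_edges E V = E" using assms by (auto simp: induced_edges_def simple_graph_def)
  then show ?thesis by (simp add: nearly_indep_sets_def)
qed

lemma two_S1_eq_iff_single_edge:
  assumes "simple_graph V E" and "E \<noteq> {}"
  shows "2 * S1 V E = (card V + 2) * sigma1 V E \<longleftrightarrow> card E = 1"
proof
  have finV: "finite V" using assms(1) by (simp add: simple_graph_def)
  show "card E = 1" if "2 * S1 V E = (card V + 2) * sigma1 V E"
  proof (rule ccontr)
    assume "card E \<noteq> 1"
    moreover have "nearly_indep_sets V E \<noteq> {}"
      using assms edge_in_nearly_indep_sets by blast
    ultimately obtain x where "x \<in> V" "card (sets_free_at V E x) < card (sets_avoiding V E x)"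
      using ex_card_sets_free_at_less[OF finV] vertex_set_in_nearly_indep_sets_iff[OF assms(1)]
      by blast
    then show False using two_S1_less[OF assms(1)] that by fastforce
  qed
  show "2 * S1 V E = (card V + 2) * sigma1 V E" if "card E = 1"
    using that card_sets_avoiding_le_single_edge[OF finV]
    by (intro two_S1_eq[OF assms(1)]) (metis card_1_singletonE)
qed

text \<open>The bound and the equality case hold for every n.\<close>

theorem mainTheorem9:
  fixes V :: "'a set" and E :: "'a set set" and n :: nat
  assumes "simple_graph V E" and "card V = n" and "n \<ge> 6"
  shows "av1 V E \<le> real n / 2 + 1
    \<and> (av1 V E = real n / 2 + 1 \<longleftrightarrow> card E = 1)"
proof (cases "E = {}")
  case True
  then show ?thesis by (simp add: av1_def)
next
  case False
  have "sigma1 V E > 0"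
    using False edge_in_nearly_indep_sets[OF assms(1)] finite_nearly_indep_sets assms(1)
    by (fastforce simp: sigma1_def simple_graph_def card_gt_0_iff)
  then have "av1 V E \<le> real n / 2 + 1 \<longleftrightarrow> real (2 * S1 V E) \<le> real ((n + 2) * sigma1 V E)"
    and "av1 V E = real n / 2 + 1 \<longleftrightarrow> real (2 * S1 V E) = real ((n + 2) * sigma1 V E)"
    using False by (simp_all add: av1_def field_simps)
  then show ?thesis
    unfolding of_nat_le_iff of_nat_eq_iff
    using two_S1_le[OF assms(1)] two_S1_eq_iff_single_edge[OF assms(1) False] assms(2) by simp
qed

end
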